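(* Let $\omega_r$ be a minuscule fundamental weight and $P=P_{S\setminus\{\alpha_r\}}$. Write $w_0^{S\setminus\{\alpha_r\}}(\omega_r)=\omega_r-\sum_{j=1}^n a_j\alpha_j$ with $a_j\in\mathbb{Z}_{\ge0}$. Fix $1\le s\le n$ and an integer $c$ with $0\le c\le a_s$. Then there is a unique minimal element $\tau_{s,c}\in W^{S\setminus\{\alpha_r\}}$ such that $\langle\omega_r-\tau_{s,c}(\omega_r),\lambda_s\rangle=c$.
   Context: $G$ simple adjoint of rank $n$ over $\mathbb{C}$, $T\subseteq B$, Weyl group $W$ with longest element $w_0$, positive roots $R^+$, simple roots $S=\{\alpha_1,\dots,\alpha_n\}$, fundamental weights $\omega_i$; $\lambda_s$ is the one-parameter subgroup with $\langle\alpha_j,\lambda_s\rangle=\delta_{sj}$. $\omega_r$ minuscule: $\langle\omega_r,\beta^\vee\rangle\le1$ for all $\beta\in R^+$. $W^{S\setminus\{\alpha_r\}}=\{w\in W:w(\alpha)>0\ \forall\alpha\in S\setminus\{\alpha_r\}\}$ is the set of minimal coset representatives of $W/W_{S\setminus\{\alpha_r\}}$, ordered by the Bruhat order, and $w_0^{S\setminus\{\alpha_r\}}$ is the minimal representative of the coset of $w_0$. Minimal means minimal with respect to the Bruhat order. *)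

theory Defs
  imports "HOL-Analysis.Analysis"
begin

text \<open>Root-system combinatorics attached to a simple (adjoint) group G of rank n.
  Everything is realised in a real Euclidean space 'a of dimension n (= X(T) tensor R).\<close>

definition coroot_pair :: "'a::euclidean_space \<Rightarrow> 'a \<Rightarrow> real" where
  "coroot_pair v \<beta> = 2 * (v \<bullet> \<beta>) / (\<beta> \<bullet> \<beta>)"

definition refl :: "'a::euclidean_space \<Rightarrow> 'a \<Rightarrow> 'a" where
  "refl \<beta> v = v - coroot_pair v \<beta> *\<^sub>R \<beta>"

definition root_system :: "'a::euclidean_space set \<Rightarrow> bool" where
  "root_system R \<longleftrightarrow> finite R \<and> 0 \<notin> R \<and> span R = UNIV \<and>
     (\<forall>\<alpha>\<in>R. \<forall>\<beta>\<in>R. refl \<alpha> \<beta> \<in> R \<and> coroot_pair \<beta> \<alpha> \<in> \<int>) \<and>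
     (\<forall>\<alpha>\<in>R. \<forall>c::real. c *\<^sub>R \<alpha> \<in> R \<longrightarrow> c = 1 \<or> c = -1)"

definition irreducible_rs :: "'a::euclidean_space set \<Rightarrow> bool" where
  "irreducible_rs R \<longleftrightarrow> \<not> (\<exists>R1 R2. R1 \<noteq> {} \<and> R2 \<noteq> {} \<and> R1 \<union> R2 = R \<and> R1 \<inter> R2 = {} \<and>
      (\<forall>x\<in>R1. \<forall>y\<in>R2. x \<bullet> y = 0))"

definition is_base :: "'a::euclidean_space set \<Rightarrow> (nat \<Rightarrow> 'a) \<Rightarrow> nat \<Rightarrow> bool" where
  "is_base R \<alpha> n \<longleftrightarrow> inj_on \<alpha> {1..n} \<and> \<alpha> ` {1..n} \<subseteq> R \<and> independent (\<alpha> ` {1..n}) \<and>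
     (\<forall>\<beta>\<in>R. \<exists>c::nat \<Rightarrow> int. \<beta> = (\<Sum>j=1..n. of_int (c j) *\<^sub>R \<alpha> j) \<and>
        ((\<forall>j\<in>{1..n}. c j \<ge> 0) \<or> (\<forall>j\<in>{1..n}. c j \<le> 0)))"

definition pos_roots :: "'a::euclidean_space set \<Rightarrow> (nat \<Rightarrow> 'a) \<Rightarrow> nat \<Rightarrow> 'a set" where
  "pos_roots R \<alpha> n = {\<beta>\<in>R. \<exists>c::nat \<Rightarrow> int. \<beta> = (\<Sum>j=1..n. of_int (c j) *\<^sub>R \<alpha> j) \<and>
        (\<forall>j\<in>{1..n}. c j \<ge> 0)}"

inductive_set refl_group :: "'a::euclidean_space set \<Rightarrow> ('a \<Rightarrow> 'a) set" for X where
  id: "id \<in> refl_group X"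
| step: "\<beta> \<in> X \<Longrightarrow> w \<in> refl_group X \<Longrightarrow> refl \<beta> \<circ> w \<in> refl_group X"

abbreviation weyl :: "'a::euclidean_space set \<Rightarrow> ('a \<Rightarrow> 'a) set" where
  "weyl R \<equiv> refl_group R"

definition wlen :: "'a::euclidean_space set \<Rightarrow> (nat \<Rightarrow> 'a) \<Rightarrow> nat \<Rightarrow> ('a \<Rightarrow> 'a) \<Rightarrow> nat" where
  "wlen R \<alpha> n w = card {\<beta> \<in> pos_roots R \<alpha> n. w \<beta> \<notin> pos_roots R \<alpha> n}"

definition bruhat_le :: "'a::euclidean_space set \<Rightarrow> (nat \<Rightarrow> 'a) \<Rightarrow> nat \<Rightarrow> ('a \<Rightarrow> 'a) \<Rightarrow> ('a \<Rightarrow> 'a) \<Rightarrow> bool" where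
  "bruhat_le R \<alpha> n u v \<longleftrightarrow>
     (u, v) \<in> {(w, refl \<beta> \<circ> w) | w \<beta>. w \<in> weyl R \<and> \<beta> \<in> pos_roots R \<alpha> n \<and>
                 wlen R \<alpha> n w < wlen R \<alpha> n (refl \<beta> \<circ> w)}\<^sup>*"

definition bruhat_less :: "'a::euclidean_space set \<Rightarrow> (nat \<Rightarrow> 'a) \<Rightarrow> nat \<Rightarrow> ('a \<Rightarrow> 'a) \<Rightarrow> ('a \<Rightarrow> 'a) \<Rightarrow> bool" where
  "bruhat_less R \<alpha> n u v \<longleftrightarrow> bruhat_le R \<alpha> n u v \<and> u \<noteq> v"

abbreviation weyl_par :: "(nat \<Rightarrow> 'a::euclidean_space) \<Rightarrow> nat \<Rightarrow> nat \<Rightarrow> ('a \<Rightarrow> 'a) set" where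
  "weyl_par \<alpha> n r \<equiv> refl_group (\<alpha> ` ({1..n} - {r}))"

definition min_reps :: "'a::euclidean_space set \<Rightarrow> (nat \<Rightarrow> 'a) \<Rightarrow> nat \<Rightarrow> nat \<Rightarrow> ('a \<Rightarrow> 'a) set" where
  "min_reps R \<alpha> n r = {w \<in> weyl R. \<forall>i\<in>{1..n} - {r}. w (\<alpha> i) \<in> pos_roots R \<alpha> n}"

end

theory Submission
  imports Defs "HOL-Library.Confluence"
begin

text \<open>Since \<open>\<omega>\<^sub>r\<close> is minuscule, every weight \<open>\<mu>\<close> in its Weyl orbit pairs with each simple
  coroot to \<open>-1\<close>, \<open>0\<close> or \<open>1\<close>. Lowering \<open>\<mu>\<close> to \<open>\<mu> - \<alpha>\<^sub>k = s\<^sub>k \<mu>\<close> when the pairing is \<open>1\<close>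
  raises the length of the corresponding element of \<open>W\<^sup>P\<close> by one, and \<open>\<tau> \<mapsto> \<tau> \<omega>\<^sub>r\<close> is
  injective on \<open>W\<^sup>P\<close>; so a lowering chain from \<open>\<tau> \<omega>\<^sub>r\<close> to \<open>\<tau>' \<omega>\<^sub>r\<close> gives
  \<open>\<tau> \<le> \<tau>'\<close> in the Bruhat order.

  Two different lowerings (or raisings) of the same weight involve orthogonal simple roots
  and commute, so both rewriting systems are confluent. Raise the lowest weight of the orbit
  as long as the \<open>\<alpha>\<^sub>s\<close>-coefficient of \<open>\<omega>\<^sub>r - \<mu>\<close> stays \<open>\<ge> c\<close> (possible since
  \<open>c \<le> a\<^sub>s\<close>). By confluence the end point \<open>g\<close> is unique and is reached from every
  weight of coefficient \<open>c\<close>; its own coefficient is exactly \<open>c\<close>, or one more raising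
  step would be possible. Hence the element of \<open>W\<^sup>P\<close> sending \<open>\<omega>\<^sub>r\<close> to \<open>g\<close> lies below every
  other one of coefficient \<open>c\<close>, and is the unique minimal one.\<close>


section \<open>Normal forms and minimal elements\<close>

lemma rtranclp_normal_form_exists:
  fixes h :: "'a \<Rightarrow> nat"
  assumes "\<And>x y. r x y \<Longrightarrow> h y < h x"
  shows "\<exists>m. r\<^sup>*\<^sup>* x m \<and> (\<nexists>y. r m y)"
proof (induction "h x" arbitrary: x rule: less_induct)
  case less
  show ?case
  proof (cases "\<exists>y. r x y")
    case True
    then obtain y where "r x y" by blast
    with less assms obtain m where "r\<^sup>*\<^sup>* y m" "\<nexists>z. r m z" by blast
    with \<open>r x y\<close> show ?thesis by (meson converse_rtranclp_into_rtranclp)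
  qed blast
qed

lemma diamond_imp_confluentp:
  assumes "\<And>x y z. r x y \<Longrightarrow> r x z \<Longrightarrow> y \<noteq> z \<Longrightarrow> \<exists>u. r y u \<and> r z u"
  shows "confluentp r"
proof (intro strong_confluentp_imp_confluentp strong_confluentpI)
  fix x y z assume "r x y" "r x z"
  show "\<exists>u. r\<^sup>*\<^sup>* y u \<and> r\<^sup>=\<^sup>= z u"
  proof (cases "y = z")
    case False
    then obtain u where "r y u" "r z u" using assms \<open>r x y\<close> \<open>r x z\<close> by blast
    then show ?thesis by auto
  qed auto
qed

lemma confluentp_rtranclp_normal_form:
  assumes "confluentp r" "r\<^sup>*\<^sup>* x y" "r\<^sup>*\<^sup>* x m" "\<nexists>z. r m z"
  shows "r\<^sup>*\<^sup>* y m"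
proof -
  obtain u where "r\<^sup>*\<^sup>* y u" "r\<^sup>*\<^sup>* m u" using confluentpD[OF assms(1-3)] by blast
  moreover from \<open>r\<^sup>*\<^sup>* m u\<close> have "u = m" using assms(4) by (cases rule: converse_rtranclpE) auto
  ultimately show ?thesis by simp
qed

lemma least_imp_ex1_minimal:
  assumes antisym: "\<And>x y. le x y \<Longrightarrow> le y x \<Longrightarrow> x = y"
    and lt: "\<And>x y. lt x y \<longleftrightarrow> le x y \<and> x \<noteq> y"
    and least: "P m" "\<And>x. P x \<Longrightarrow> le m x"
  shows "\<exists>!m. P m \<and> (\<forall>x. P x \<longrightarrow> \<not> lt x m)"
proof (rule ex1I[of _ m])
  have "\<not> lt x m" if "P x" for x
    using antisym[of x m] least(2)[OF that] lt[of x m] by blast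
  then show "P m \<and> (\<forall>x. P x \<longrightarrow> \<not> lt x m)" using least(1) by blast
next
  fix m' assume "P m' \<and> (\<forall>x. P x \<longrightarrow> \<not> lt x m')"
  then show "m' = m" using least lt[of m m'] by blast
qed

section \<open>Reflections\<close>

lemma coroot_pair_add: "coroot_pair (x + y) b = coroot_pair x b + coroot_pair y b"
  by (simp add: coroot_pair_def inner_add_left add_divide_distrib)

lemma coroot_pair_diff: "coroot_pair (x - y) b = coroot_pair x b - coroot_pair y b"
  by (simp add: coroot_pair_def inner_diff_left diff_divide_distrib)

lemma coroot_pair_scaleR: "coroot_pair (c *\<^sub>R x) b = c * coroot_pair x b"
  by (simp add: coroot_pair_def)

lemma coroot_pair_uminus_right: "coroot_pair x (- b) = - coroot_pair x b"
  by (simp add: coroot_pair_def)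

lemma coroot_pair_self: "b \<noteq> 0 \<Longrightarrow> coroot_pair b b = 2"
  by (simp add: coroot_pair_def)

lemma coroot_pair_orthogonal_map:
  assumes "\<And>x y. v x \<bullet> v y = x \<bullet> y"
  shows "coroot_pair (v x) (v b) = coroot_pair x b"
  by (simp add: coroot_pair_def assms)

lemma linear_refl: "linear (refl b)"
  by (rule linearI) (simp_all add: refl_def coroot_pair_add coroot_pair_scaleR algebra_simps)

lemma refl_inner: "b \<noteq> 0 \<Longrightarrow> refl b x \<bullet> refl b y = x \<bullet> y"
  by (simp add: refl_def coroot_pair_def inner_diff_left inner_diff_right algebra_simps)
    (simp add: field_simps inner_commute)

lemma refl_refl: "b \<noteq> 0 \<Longrightarrow> refl b (refl b x) = x"
  by (simp add: refl_def coroot_pair_diff coroot_pair_scaleR coroot_pair_self)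

lemma refl_self: "b \<noteq> 0 \<Longrightarrow> refl b b = - b"
  by (simp add: refl_def coroot_pair_self scaleR_2)

lemma refl_uminus_root: "refl (- b) = refl b"
  by (rule ext) (simp add: refl_def coroot_pair_def)

lemma refl_uminus: "refl b (- x) = - refl b x"
  using linear_refl linear_neg by blast

lemma refl_conj:
  assumes "linear v" "\<And>x y. v x \<bullet> v y = x \<bullet> y"
  shows "refl (v b) (v x) = v (refl b x)"
  using assms by (simp add: refl_def coroot_pair_orthogonal_map linear_diff linear_scale)

fun refl_word :: "(nat \<Rightarrow> 'a::euclidean_space) \<Rightarrow> nat list \<Rightarrow> 'a \<Rightarrow> 'a" where
  "refl_word \<alpha> [] = id"
| "refl_word \<alpha> (k # l) = refl (\<alpha> k) \<circ> refl_word \<alpha> l"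

lemma refl_word_append: "refl_word \<alpha> (l1 @ l2) = refl_word \<alpha> l1 \<circ> refl_word \<alpha> l2"
  by (induction l1) auto

lemma linear_refl_word: "linear (refl_word \<alpha> l)"
  by (induction l) (simp_all add: linear_id[unfolded id_def] linear_compose[OF _ linear_refl, unfolded comp_def])

section \<open>Root systems with a base\<close>

locale based_root_system =
  fixes R :: "'a::euclidean_space set" and \<alpha> :: "nat \<Rightarrow> 'a" and n :: nat and lam :: "nat \<Rightarrow> 'a"
  assumes root_system: "root_system R" and base: "is_base R \<alpha> n"
    and lam: "\<forall>t\<in>{1..n}. \<forall>j\<in>{1..n}. \<alpha> j \<bullet> lam t = (if j = t then 1 else 0)"
begin

abbreviation "Rp \<equiv> pos_roots R \<alpha> n"

abbreviation is_word :: "nat list \<Rightarrow> bool" where "is_word l \<equiv> set l \<subseteq> {1..n}"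

lemma finite_roots: "finite R"
  using root_system by (simp add: root_system_def)

lemma refl_in_roots: "a \<in> R \<Longrightarrow> b \<in> R \<Longrightarrow> refl a b \<in> R"
  using root_system by (simp add: root_system_def)

lemma coroot_pair_roots_int: "a \<in> R \<Longrightarrow> b \<in> R \<Longrightarrow> coroot_pair b a \<in> \<int>"
  using root_system by (simp add: root_system_def)

lemma root_multiple: "a \<in> R \<Longrightarrow> c *\<^sub>R a \<in> R \<Longrightarrow> c = 1 \<or> c = -1"
  using root_system by (simp add: root_system_def)

lemma root_nonzero: "a \<in> R \<Longrightarrow> a \<noteq> 0"
  using root_system by (auto simp: root_system_def)

lemma simple_root: "j \<in> {1..n} \<Longrightarrow> \<alpha> j \<in> R"
  using base by (auto simp: is_base_def)

lemma simple_root_nonzero: "j \<in> {1..n} \<Longrightarrow> \<alpha> j \<noteq> 0"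
  using simple_root root_nonzero by blast

lemma simple_root_coeff: "t \<in> {1..n} \<Longrightarrow> j \<in> {1..n} \<Longrightarrow> \<alpha> j \<bullet> lam t = (if j = t then 1 else 0)"
  using lam by auto

lemma coeff_lincomb: "t \<in> {1..n} \<Longrightarrow> (\<Sum>j=1..n. f j *\<^sub>R \<alpha> j) \<bullet> lam t = f t"
proof -
  assume t: "t \<in> {1..n}"
  have "(\<Sum>j=1..n. f j *\<^sub>R \<alpha> j) \<bullet> lam t = (\<Sum>j=1..n. if j = t then f j else 0)"
    by (rule trans[OF inner_sum_left sum.cong]) (simp_all add: simple_root_coeff[OF t])
  then show ?thesis using t by simp
qed

lemma root_coeffs:
  assumes "b \<in> R"
  shows root_coeff_expansion: "b = (\<Sum>j=1..n. (b \<bullet> lam j) *\<^sub>R \<alpha> j)"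
    and root_coeff_int: "\<forall>j\<in>{1..n}. b \<bullet> lam j \<in> \<int>"
    and root_coeff_sign: "(\<forall>j\<in>{1..n}. 0 \<le> b \<bullet> lam j) \<or> (\<forall>j\<in>{1..n}. b \<bullet> lam j \<le> 0)"
proof -
  obtain c :: "nat \<Rightarrow> int" where c: "b = (\<Sum>j=1..n. of_int (c j) *\<^sub>R \<alpha> j)"
    "(\<forall>j\<in>{1..n}. c j \<ge> 0) \<or> (\<forall>j\<in>{1..n}. c j \<le> 0)"
    using base assms unfolding is_base_def by blast
  have coeff: "t \<in> {1..n} \<Longrightarrow> b \<bullet> lam t = of_int (c t)" for t
    using c(1) coeff_lincomb by simp
  show "b = (\<Sum>j=1..n. (b \<bullet> lam j) *\<^sub>R \<alpha> j)"
    by (subst c(1)) (rule sum.cong, simp_all add: coeff)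
  show "\<forall>j\<in>{1..n}. b \<bullet> lam j \<in> \<int>" using coeff by simp
  show "(\<forall>j\<in>{1..n}. 0 \<le> b \<bullet> lam j) \<or> (\<forall>j\<in>{1..n}. b \<bullet> lam j \<le> 0)"
    using c(2) coeff by auto
qed

lemma pos_roots_iff: "b \<in> Rp \<longleftrightarrow> b \<in> R \<and> (\<forall>j\<in>{1..n}. 0 \<le> b \<bullet> lam j)"
proof
  assume "b \<in> Rp"
  then show "b \<in> R \<and> (\<forall>j\<in>{1..n}. 0 \<le> b \<bullet> lam j)"
    unfolding pos_roots_def using coeff_lincomb by auto
next
  assume b: "b \<in> R \<and> (\<forall>j\<in>{1..n}. 0 \<le> b \<bullet> lam j)"
  have "\<forall>j. \<exists>m::int. j \<in> {1..n} \<longrightarrow> b \<bullet> lam j = of_int m"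
    using root_coeff_int[of b] b by (auto elim!: Ints_cases)
  then obtain c :: "nat \<Rightarrow> int" where c: "\<forall>j\<in>{1..n}. b \<bullet> lam j = of_int (c j)"
    by metis
  have "b = (\<Sum>j=1..n. of_int (c j) *\<^sub>R \<alpha> j)"
    using root_coeff_expansion[of b] b c by (metis (no_types, lifting) sum.cong)
  moreover have "\<forall>j\<in>{1..n}. c j \<ge> 0" using b c by force
  ultimately show "b \<in> Rp" using b unfolding pos_roots_def by blast
qed

lemma pos_roots_subset: "Rp \<subseteq> R"
  by (auto simp: pos_roots_def)

lemma uminus_root: "b \<in> R \<Longrightarrow> - b \<in> R"
  using refl_in_roots[of b b] refl_self root_nonzero by metis

lemma pos_or_neg_root: "b \<in> R \<Longrightarrow> b \<in> Rp \<or> - b \<in> Rp"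
  using root_coeff_sign[of b] uminus_root[of b] by (auto simp: pos_roots_iff)

lemma root_coeff_nonzero: "b \<in> R \<Longrightarrow> \<exists>j\<in>{1..n}. b \<bullet> lam j \<noteq> 0"
proof (rule ccontr)
  assume b: "b \<in> R" and "\<not> (\<exists>j\<in>{1..n}. b \<bullet> lam j \<noteq> 0)"
  then have "b = (\<Sum>j=1..n. 0 *\<^sub>R \<alpha> j)"
    by (subst root_coeff_expansion[OF b]) (rule sum.cong, auto)
  then show False using root_nonzero[OF b] by simp
qed

lemma pos_root_uminus: "b \<in> Rp \<Longrightarrow> - b \<notin> Rp"
  using root_coeff_nonzero[of b] by (force simp: pos_roots_iff)

lemma pos_root_if_coeff_pos: "b \<in> R \<Longrightarrow> j \<in> {1..n} \<Longrightarrow> 0 < b \<bullet> lam j \<Longrightarrow> b \<in> Rp"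
  using pos_or_neg_root[of b] by (force simp: pos_roots_iff)

lemma simple_pos_root: "i \<in> {1..n} \<Longrightarrow> \<alpha> i \<in> Rp"
  using simple_root by (simp add: pos_roots_iff simple_root_coeff)

lemma refl_simple_coeff:
  "i \<in> {1..n} \<Longrightarrow> j \<in> {1..n} \<Longrightarrow> j \<noteq> i \<Longrightarrow> refl (\<alpha> i) b \<bullet> lam j = b \<bullet> lam j"
  by (simp add: refl_def inner_diff_left simple_root_coeff)

lemma refl_simple_pos_root:
  assumes i: "i \<in> {1..n}" and b: "b \<in> Rp" "b \<noteq> \<alpha> i"
  shows "refl (\<alpha> i) b \<in> Rp"
proof -
  have bR: "b \<in> R" using b pos_roots_iff by blast
  have "\<exists>j\<in>{1..n}. j \<noteq> i \<and> 0 < b \<bullet> lam j"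
  proof (rule ccontr)
    assume "\<not> ?thesis"
    then have other: "\<forall>j\<in>{1..n}. j \<noteq> i \<longrightarrow> b \<bullet> lam j = 0" using b pos_roots_iff by force
    have "b = (\<Sum>j=1..n. (b \<bullet> lam j) *\<^sub>R \<alpha> j)" using root_coeff_expansion bR .
    also have "\<dots> = (\<Sum>j=1..n. if j = i then (b \<bullet> lam i) *\<^sub>R \<alpha> i else 0)"
      by (rule sum.cong) (auto simp: other)
    finally have "b = (b \<bullet> lam i) *\<^sub>R \<alpha> i" using i by simp
    moreover have "0 \<le> b \<bullet> lam i" using b i pos_roots_iff by blast
    ultimately show False
      using root_multiple[OF simple_root[OF i], of "b \<bullet> lam i"] bR b(2) by force
  qed
  then obtain j where j: "j \<in> {1..n}" "j \<noteq> i" "0 < b \<bullet> lam j" by blast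
  have "refl (\<alpha> i) b \<in> R" using refl_in_roots simple_root i bR by blast
  then show ?thesis
    using pos_root_if_coeff_pos[of "refl (\<alpha> i) b" j] refl_simple_coeff[OF i j(1,2)] j by simp
qed

lemma cartan_off_diag_nonpos:
  assumes i: "i \<in> {1..n}" and j: "j \<in> {1..n}" and ij: "i \<noteq> j"
  shows "coroot_pair (\<alpha> i) (\<alpha> j) \<le> 0"
proof (rule ccontr)
  assume pos: "\<not> ?thesis"
  let ?b = "refl (\<alpha> j) (\<alpha> i)"
  have "?b \<in> R" using refl_in_roots simple_root i j by blast
  moreover have "?b \<bullet> lam i = 1" using refl_simple_coeff[OF j i ij] simple_root_coeff i by simp
  moreover have "?b \<bullet> lam j = - coroot_pair (\<alpha> i) (\<alpha> j)"
    using ij simple_root_coeff[OF j i] simple_root_coeff[OF j j] by (simp add: refl_def inner_diff_left)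
  ultimately show False using pos_or_neg_root pos i j by (force simp: pos_roots_iff)
qed

lemma refl_word_inner: "is_word l \<Longrightarrow> refl_word \<alpha> l x \<bullet> refl_word \<alpha> l y = x \<bullet> y"
  by (induction l arbitrary: x y) (auto simp: refl_inner simple_root_nonzero)

lemma refl_word_root: "is_word l \<Longrightarrow> b \<in> R \<Longrightarrow> refl_word \<alpha> l b \<in> R"
proof (induction l)
  case (Cons k l)
  then show ?case using refl_in_roots[OF simple_root] by simp
qed simp

lemma refl_word_rev: "is_word l \<Longrightarrow> refl_word \<alpha> (rev l) (refl_word \<alpha> l x) = x"
  by (induction l arbitrary: x) (auto simp: refl_word_append refl_refl simple_root_nonzero)

lemma refl_word_rev': "is_word l \<Longrightarrow> refl_word \<alpha> l (refl_word \<alpha> (rev l) x) = x"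
  using refl_word_rev[of "rev l"] by simp

lemma refl_word_in_weyl: "is_word l \<Longrightarrow> refl_word \<alpha> l \<in> weyl R"
proof (induction l)
  case (Cons k l)
  then show ?case
    unfolding refl_word.simps by (intro refl_group.step simple_root) auto
qed (simp add: refl_group.id)

lemma refl_word_conj:
  assumes l: "is_word l"
  shows "refl (refl_word \<alpha> l b) = refl_word \<alpha> l \<circ> refl b \<circ> refl_word \<alpha> (rev l)"
proof
  fix y
  have "refl (refl_word \<alpha> l b) y = refl (refl_word \<alpha> l b) (refl_word \<alpha> l (refl_word \<alpha> (rev l) y))"
    using refl_word_rev'[OF l] by simp
  also have "\<dots> = refl_word \<alpha> l (refl b (refl_word \<alpha> (rev l) y))"
    by (rule refl_conj[OF linear_refl_word refl_word_inner[OF l]])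
  finally show "refl (refl_word \<alpha> l b) y = (refl_word \<alpha> l \<circ> refl b \<circ> refl_word \<alpha> (rev l)) y"
    by simp
qed

definition height :: "'a \<Rightarrow> real" where "height x = x \<bullet> (\<Sum>j=1..n. lam j)"

lemma height_sum: "height x = (\<Sum>j=1..n. x \<bullet> lam j)"
  by (simp add: height_def inner_sum_right)

lemma height_diff_scaleR: "height (x - c *\<^sub>R y) = height x - c * height y"
  by (simp add: height_def inner_diff_left)

lemma height_add: "height (x + y) = height x + height y"
  by (simp add: height_def inner_add_left)

lemma height_simple_root: "i \<in> {1..n} \<Longrightarrow> height (\<alpha> i) = 1"
proof -
  assume i: "i \<in> {1..n}"
  have "height (\<alpha> i) = (\<Sum>j=1..n. if i = j then 1 else 0)"
    unfolding height_sum by (rule sum.cong) (use simple_root_coeff i in auto)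
  then show ?thesis using i by simp
qed

lemma height_pos: "b \<in> Rp \<Longrightarrow> 0 < height b"
proof -
  assume b: "b \<in> Rp"
  then have nonneg: "\<forall>j\<in>{1..n}. 0 \<le> b \<bullet> lam j" using pos_roots_iff by auto
  obtain j where j: "j \<in> {1..n}" "b \<bullet> lam j \<noteq> 0"
    using root_coeff_nonzero b pos_roots_subset by blast
  have "0 < b \<bullet> lam j" using j nonneg by force
  also have "\<dots> \<le> height b"
    unfolding height_sum by (rule member_le_sum) (use nonneg j in auto)
  finally show ?thesis .
qed

text \<open>Expanding \<open>b \<bullet> b > 0\<close> in the base gives a simple root \<open>\<alpha> j\<close> with \<open>b \<bullet> \<alpha> j > 0\<close>.\<close>
lemma pos_root_height_reduction:
  assumes b: "b \<in> Rp" "b \<notin> \<alpha> ` {1..n}"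
  obtains j where "j \<in> {1..n}" "refl (\<alpha> j) b \<in> Rp" "height (refl (\<alpha> j) b) \<le> height b - 1"
proof -
  have bR: "b \<in> R" and nonneg: "\<forall>j\<in>{1..n}. 0 \<le> b \<bullet> lam j" using b pos_roots_iff by auto
  have "0 < b \<bullet> b" using root_nonzero[OF bR] by simp
  also have "b \<bullet> b = (\<Sum>j=1..n. (b \<bullet> lam j) * (b \<bullet> \<alpha> j))"
    by (subst (2) root_coeff_expansion[OF bR]) (simp add: inner_sum_right)
  finally obtain j where j: "j \<in> {1..n}" "0 < (b \<bullet> lam j) * (b \<bullet> \<alpha> j)"
    by (metis (no_types, lifting) not_le sum_nonpos)
  then have "0 < b \<bullet> \<alpha> j" using nonneg[rule_format, OF j(1)] by (auto simp: zero_less_mult_iff)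
  then have "0 < coroot_pair b (\<alpha> j)" using simple_root_nonzero[OF j(1)] by (simp add: coroot_pair_def)
  moreover have "coroot_pair b (\<alpha> j) \<in> \<int>" using coroot_pair_roots_int simple_root j(1) bR by blast
  ultimately have "1 \<le> coroot_pair b (\<alpha> j)" by (auto elim!: Ints_cases)
  moreover have "height (refl (\<alpha> j) b) = height b - coroot_pair b (\<alpha> j)"
    using height_diff_scaleR height_simple_root[OF j(1)] by (simp add: refl_def)
  moreover have "refl (\<alpha> j) b \<in> Rp" using refl_simple_pos_root j(1) b by blast
  ultimately show ?thesis using that j(1) by simp
qed

lemma pos_root_word: "b \<in> Rp \<Longrightarrow> \<exists>l i. is_word l \<and> i \<in> {1..n} \<and> b = refl_word \<alpha> l (\<alpha> i)"
proof (induction "nat \<lceil>height b\<rceil>" arbitrary: b rule: less_induct)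
  case less
  show ?case
  proof (cases "b \<in> \<alpha> ` {1..n}")
    case True
    then obtain i where "i \<in> {1..n}" "b = \<alpha> i" by blast
    then show ?thesis by (intro exI[of _ "[]"] exI[of _ i]) simp
  next
    case False
    then obtain j where j: "j \<in> {1..n}" "refl (\<alpha> j) b \<in> Rp"
      "height (refl (\<alpha> j) b) \<le> height b - 1"
      using pos_root_height_reduction less.prems by blast
    have "nat \<lceil>height (refl (\<alpha> j) b)\<rceil> < nat \<lceil>height b\<rceil>"
      using j(3) height_pos[OF j(2)] by linarith
    then obtain l i where li: "is_word l" "i \<in> {1..n}" "refl (\<alpha> j) b = refl_word \<alpha> l (\<alpha> i)"
      using less.hyps j(2) by blast
    have "b = refl_word \<alpha> (j # l) (\<alpha> i)"
      using li(3) refl_refl[OF simple_root_nonzero[OF j(1)], of b] by simp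
    then show ?thesis using li j(1) by (intro exI[of _ "j # l"] exI[of _ i]) simp
  qed
qed

lemma weyl_word: "v \<in> weyl R \<Longrightarrow> \<exists>l. is_word l \<and> v = refl_word \<alpha> l"
proof (induction rule: refl_group.induct)
  case id
  show ?case by (intro exI[of _ "[]"]) simp
next
  case (step b v)
  then obtain l where l: "is_word l" "v = refl_word \<alpha> l" by blast
  obtain g where g: "g \<in> Rp" "refl b = refl g"
    using pos_or_neg_root[OF step.hyps(1)] refl_uminus_root[of b] by force
  obtain m i where mi: "is_word m" "i \<in> {1..n}" "g = refl_word \<alpha> m (\<alpha> i)"
    using pos_root_word g(1) by blast
  have "refl b \<circ> v = refl_word \<alpha> (m @ i # rev m @ l)"
    using g(2) mi refl_word_conj[OF mi(1)] l by (simp add: refl_word_append comp_assoc)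
  moreover have "is_word (m @ i # rev m @ l)" using mi l by auto
  ultimately show ?case by blast
qed

lemma weyl_root: "v \<in> weyl R \<Longrightarrow> b \<in> R \<Longrightarrow> v b \<in> R"
  using weyl_word refl_word_root by blast

text \<open>Exchange condition: the letter of \<open>l\<close> at which the image of \<open>\<alpha> k\<close> turns negative
  cancels against the final \<open>s\<^sub>k\<close>.\<close>
lemma refl_word_exchange:
  assumes l: "is_word l" and k: "k \<in> {1..n}" and neg: "refl_word \<alpha> l (\<alpha> k) \<notin> Rp"
  obtains l' where "is_word l'" "length l' < length l" "refl_word \<alpha> (l @ [k]) = refl_word \<alpha> l'"
proof -
  define f where "f t = refl_word \<alpha> (drop t l) (\<alpha> k)" for t
  have "f (length l) \<in> Rp" "f 0 \<notin> Rp" using simple_pos_root[OF k] neg by (simp_all add: f_def)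
  then obtain t where t: "t < length l" "f t \<notin> Rp" "f (Suc t) \<in> Rp"
    using ex_least_nat_less[of "\<lambda>t. f t \<in> Rp"] by auto
  define j where "j = l ! t"
  define v where "v = refl_word \<alpha> (drop (Suc t) l)"
  have j: "j \<in> {1..n}" using l t(1) j_def nth_mem by blast
  have drop_t: "drop t l = j # drop (Suc t) l" using t(1) j_def by (simp add: Cons_nth_drop_Suc)
  have drop_word: "is_word (drop (Suc t) l)" using l by (meson order_trans set_drop_subset)
  have "f t = refl (\<alpha> j) (f (Suc t))" using drop_t by (simp add: f_def)
  then have "v (\<alpha> k) = \<alpha> j" using refl_simple_pos_root[OF j t(3)] t(2) by (auto simp: f_def v_def)
  then have commute: "refl (\<alpha> j) \<circ> v = v \<circ> refl (\<alpha> k)"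
    using refl_conj[OF linear_refl_word refl_word_inner[OF drop_word], of "\<alpha> k"]
    by (intro ext) (auto simp: v_def)
  define pre where "pre = take t l"
  have l_split: "l = pre @ j # drop (Suc t) l" using append_take_drop_id[of t l] drop_t by (simp add: pre_def)
  have "refl_word \<alpha> (l @ [k]) = refl_word \<alpha> pre \<circ> (refl (\<alpha> j) \<circ> v) \<circ> refl (\<alpha> k)"
    by (subst l_split) (simp add: refl_word_append v_def o_def)
  also have "\<dots> = refl_word \<alpha> pre \<circ> v \<circ> (refl (\<alpha> k) \<circ> refl (\<alpha> k))"
    using commute by (simp add: comp_assoc)
  also have "refl (\<alpha> k) \<circ> refl (\<alpha> k) = id" using refl_refl[OF simple_root_nonzero[OF k]] by auto
  finally have "refl_word \<alpha> (l @ [k]) = refl_word \<alpha> (pre @ drop (Suc t) l)"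
    by (simp add: refl_word_append v_def o_def)
  moreover have "is_word (pre @ drop (Suc t) l)" using l drop_word by (auto simp: pre_def dest: in_set_takeD)
  moreover have "length (pre @ drop (Suc t) l) < length l" using t(1) by (simp add: pre_def)
  ultimately show ?thesis using that by blast
qed

lemma weyl_simple_pos_imp_id:
  assumes v: "v \<in> weyl R" and pos: "\<forall>i\<in>{1..n}. v (\<alpha> i) \<in> Rp"
  shows "v = id"
proof -
  have "refl_word \<alpha> l = id" if "is_word l" "\<forall>i\<in>{1..n}. refl_word \<alpha> l (\<alpha> i) \<in> Rp" for l
    using that
  proof (induction "length l" arbitrary: l rule: less_induct)
    case less
    show ?case
    proof (cases l rule: rev_exhaust)
      case (snoc l' k)
      have k: "k \<in> {1..n}" and l': "is_word l'" using less.prems(1) snoc by auto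
      have "refl_word \<alpha> l (\<alpha> k) = - refl_word \<alpha> l' (\<alpha> k)"
        using snoc refl_self[OF simple_root_nonzero[OF k]] linear_neg[OF linear_refl_word]
        by (simp add: refl_word_append)
      moreover have "refl_word \<alpha> l (\<alpha> k) \<in> Rp" using less.prems(2) k by blast
      ultimately have "refl_word \<alpha> l' (\<alpha> k) \<notin> Rp"
        using pos_root_uminus[of "- refl_word \<alpha> l' (\<alpha> k)"] by simp
      then obtain l'' where "is_word l''" "length l'' < length l'"
        "refl_word \<alpha> (l' @ [k]) = refl_word \<alpha> l''"
        using refl_word_exchange[OF l' k] by blast
      then show ?thesis using less.hyps[of l''] less.prems(2) snoc by simp
    qed simp
  qed
  then show ?thesis using weyl_word[OF v] pos by blast
qed

lemma wlen_id: "wlen R \<alpha> n id = 0"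
  by (simp add: wlen_def)

lemma wlen_le_card: "wlen R \<alpha> n v \<le> card Rp"
  unfolding wlen_def
  by (rule card_mono) (auto intro: finite_subset[OF pos_roots_subset finite_roots])

lemma bruhat_le_wlen: "bruhat_le R \<alpha> n u v \<Longrightarrow> u = v \<or> wlen R \<alpha> n u < wlen R \<alpha> n v"
  unfolding bruhat_le_def by (induction rule: rtrancl_induct) auto

lemma inversions_refl_simple:
  assumes v: "v \<in> weyl R" and i: "i \<in> {1..n}" and d: "d \<in> Rp" "v d = \<alpha> i"
  shows "{b \<in> Rp. refl (\<alpha> i) (v b) \<notin> Rp} = insert d {b \<in> Rp. v b \<notin> Rp}"
proof -
  obtain l where l: "is_word l" "v = refl_word \<alpha> l" using weyl_word[OF v] by blast
  have inj: "inj v"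
    unfolding l(2) by (rule inj_on_inverseI[where g = "refl_word \<alpha> (rev l)"]) (rule refl_word_rev[OF l(1)])
  have neg: "v (- x) = - v x" for x using linear_neg[OF linear_refl_word] l(2) by blast
  show ?thesis
  proof (intro equalityI subsetI)
    fix b assume "b \<in> {b \<in> Rp. refl (\<alpha> i) (v b) \<notin> Rp}"
    then have b: "b \<in> Rp" "refl (\<alpha> i) (v b) \<notin> Rp" by auto
    show "b \<in> insert d {b \<in> Rp. v b \<notin> Rp}"
    proof (cases "v b \<in> Rp")
      case True
      then have "v b = v d" using b(2) d(2) refl_simple_pos_root[OF i] by metis
      then show ?thesis using injD[OF inj] by blast
    qed (use b(1) in simp)
  next
    fix b assume b: "b \<in> insert d {b \<in> Rp. v b \<notin> Rp}"
    show "b \<in> {b \<in> Rp. refl (\<alpha> i) (v b) \<notin> Rp}"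
    proof (cases "b = d")
      case True
      then show ?thesis
        using d refl_self[OF simple_root_nonzero[OF i]] pos_root_uminus[OF simple_pos_root[OF i]] by simp
    next
      case False
      then have bp: "b \<in> Rp" and "v b \<notin> Rp" using b by auto
      moreover have "v b \<in> R" using weyl_root[OF v] bp pos_roots_subset by blast
      ultimately have minus: "- v b \<in> Rp" using pos_or_neg_root by blast
      have "- v b \<noteq> \<alpha> i"
      proof
        assume "- v b = \<alpha> i"
        then have "v (- b) = v d" by (simp only: neg d(2))
        then have "- b = d" using injD[OF inj] by blast
        then show False using pos_root_uminus[OF bp] d(1) by simp
      qed
      then have "- refl (\<alpha> i) (v b) \<in> Rp" using refl_simple_pos_root[OF i minus] refl_uminus by metis
      then have "refl (\<alpha> i) (v b) \<notin> Rp"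
        using pos_root_uminus[of "- refl (\<alpha> i) (v b)"] by simp
      with bp show ?thesis by simp
    qed
  qed
qed

lemma wlen_refl_simple:
  assumes v: "v \<in> weyl R" and i: "i \<in> {1..n}" and d: "d \<in> Rp" "v d = \<alpha> i"
  shows "wlen R \<alpha> n (refl (\<alpha> i) \<circ> v) = Suc (wlen R \<alpha> n v)"
proof -
  have "d \<notin> {b \<in> Rp. v b \<notin> Rp}" using d(2) simple_pos_root[OF i] by simp
  moreover have "finite {b \<in> Rp. v b \<notin> Rp}"
    using finite_subset[OF pos_roots_subset finite_roots] by simp
  ultimately show ?thesis using inversions_refl_simple[OF assms] unfolding wlen_def by simp
qed

lemma refl_word_pairing_int:
  assumes "is_word l" "\<forall>k\<in>{1..n}. coroot_pair \<mu> (\<alpha> k) \<in> \<int>" "j \<in> {1..n}"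
  shows "coroot_pair (refl_word \<alpha> l \<mu>) (\<alpha> j) \<in> \<int>"
  using assms
proof (induction l arbitrary: j)
  case (Cons k l)
  then have "coroot_pair (refl_word \<alpha> l \<mu>) (\<alpha> k) \<in> \<int>" "coroot_pair (\<alpha> k) (\<alpha> j) \<in> \<int>"
    using coroot_pair_roots_int simple_root by auto
  moreover have "coroot_pair (refl_word \<alpha> l \<mu>) (\<alpha> j) \<in> \<int>" using Cons by simp
  ultimately show ?case by (simp add: refl_def coroot_pair_diff coroot_pair_scaleR)
qed simp

end


section \<open>The orbit of a minuscule weight\<close>

locale minuscule_weight = based_root_system +
  fixes r :: nat and w :: 'a
  assumes r: "r \<in> {1..n}"
    and fundamental: "\<forall>j\<in>{1..n}. coroot_pair w (\<alpha> j) = (if r = j then 1 else 0)"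
    and minuscule: "\<forall>\<beta>\<in>Rp. coroot_pair w \<beta> \<le> 1"
begin

abbreviation "WP \<equiv> min_reps R \<alpha> n r"

abbreviation pairing :: "nat \<Rightarrow> 'a \<Rightarrow> real" where
  "pairing k \<mu> \<equiv> coroot_pair \<mu> (\<alpha> k)"

lemma inner_w_simple_root: "j \<in> {1..n} \<Longrightarrow> w \<bullet> \<alpha> j = (if j = r then (\<alpha> r \<bullet> \<alpha> r) / 2 else 0)"
proof -
  assume j: "j \<in> {1..n}"
  have "2 * (w \<bullet> \<alpha> j) / (\<alpha> j \<bullet> \<alpha> j) = (if r = j then 1 else 0)"
    using fundamental j by (simp add: coroot_pair_def)
  moreover have "\<alpha> j \<bullet> \<alpha> j \<noteq> 0" using simple_root_nonzero[OF j] by simp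
  ultimately show ?thesis by (auto simp: field_simps split: if_splits)
qed

lemma inner_w_root: "b \<in> R \<Longrightarrow> w \<bullet> b = (b \<bullet> lam r) * (\<alpha> r \<bullet> \<alpha> r) / 2"
proof -
  assume b: "b \<in> R"
  have "w \<bullet> b = (\<Sum>j=1..n. (b \<bullet> lam j) * (w \<bullet> \<alpha> j))"
    by (subst root_coeff_expansion[OF b]) (simp add: inner_sum_right)
  also have "\<dots> = (\<Sum>j=1..n. if j = r then (b \<bullet> lam r) * (\<alpha> r \<bullet> \<alpha> r) / 2 else 0)"
    by (rule sum.cong) (simp_all add: inner_w_simple_root)
  finally show ?thesis using r by simp
qed

lemma coroot_pair_w_root:
  assumes b: "b \<in> R"
  obtains c where "0 < c" "coroot_pair w b = (b \<bullet> lam r) * c"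
proof
  show "0 < (\<alpha> r \<bullet> \<alpha> r) / (b \<bullet> b)" using simple_root_nonzero[OF r] root_nonzero[OF b] by simp
  show "coroot_pair w b = (b \<bullet> lam r) * ((\<alpha> r \<bullet> \<alpha> r) / (b \<bullet> b))"
    using inner_w_root[OF b] by (simp add: coroot_pair_def)
qed

lemma coroot_pair_w_pos_iff: "b \<in> R \<Longrightarrow> 0 < coroot_pair w b \<longleftrightarrow> 0 < b \<bullet> lam r"
  by (elim coroot_pair_w_root) (simp add: zero_less_mult_iff)

lemma coroot_pair_w_nonneg_iff: "b \<in> R \<Longrightarrow> 0 \<le> coroot_pair w b \<longleftrightarrow> 0 \<le> b \<bullet> lam r"
  by (elim coroot_pair_w_root) (simp add: zero_le_mult_iff)

definition orbit :: "'a set" where "orbit = {refl_word \<alpha> l w | l. is_word l}"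

lemma top_in_orbit: "w \<in> orbit"
  unfolding orbit_def by (auto intro!: exI[of _ "[]"])

lemma refl_simple_in_orbit: "\<mu> \<in> orbit \<Longrightarrow> k \<in> {1..n} \<Longrightarrow> refl (\<alpha> k) \<mu> \<in> orbit"
proof -
  assume "\<mu> \<in> orbit" "k \<in> {1..n}"
  then obtain l where "is_word l" "\<mu> = refl_word \<alpha> l w" unfolding orbit_def by blast
  then have "is_word (k # l)" "refl (\<alpha> k) \<mu> = refl_word \<alpha> (k # l) w" using \<open>k \<in> {1..n}\<close> by auto
  then show ?thesis unfolding orbit_def by blast
qed

lemma weyl_in_orbit: "\<tau> \<in> weyl R \<Longrightarrow> \<tau> w \<in> orbit"
  using weyl_word unfolding orbit_def by blast

text \<open>Minuscularity bounds the pairing of \<open>w\<close> with every root by 1, and the pairing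
  of \<open>\<mu> = v w\<close> with \<open>\<alpha> k\<close> is that of \<open>w\<close> with the root \<open>v\<inverse> \<alpha> k\<close>.\<close>
lemma orbit_pairing: "\<mu> \<in> orbit \<Longrightarrow> k \<in> {1..n} \<Longrightarrow> pairing k \<mu> \<in> {-1, 0, 1}"
proof -
  assume "\<mu> \<in> orbit" and k: "k \<in> {1..n}"
  then obtain l where l: "is_word l" "\<mu> = refl_word \<alpha> l w" unfolding orbit_def by blast
  define g where "g = refl_word \<alpha> (rev l) (\<alpha> k)"
  have g: "g \<in> R" using refl_word_root simple_root[OF k] l(1) by (simp add: g_def)
  have "pairing k \<mu> = coroot_pair (refl_word \<alpha> l w) (refl_word \<alpha> l g)"
    using l refl_word_rev'[OF l(1)] by (simp add: g_def)
  also have "\<dots> = coroot_pair w g"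
    by (rule coroot_pair_orthogonal_map[OF refl_word_inner[OF l(1)]])
  finally have eq: "pairing k \<mu> = coroot_pair w g" .
  have "\<forall>j\<in>{1..n}. pairing j w \<in> \<int>" using fundamental by simp
  then have "pairing k (refl_word \<alpha> l w) \<in> \<int>" by (rule refl_word_pairing_int[OF l(1) _ k])
  then have "coroot_pair w g \<in> \<int>" using eq l(2) by simp
  moreover have "-1 \<le> coroot_pair w g \<and> coroot_pair w g \<le> 1"
  proof (cases "g \<in> Rp")
    case True
    then have "0 \<le> g \<bullet> lam r" using r by (simp add: pos_roots_iff)
    then show ?thesis using True minuscule coroot_pair_w_nonneg_iff[OF g] by auto
  next
    case False
    then have neg: "- g \<in> Rp" using pos_or_neg_root[OF g] by blast
    then have "0 \<le> - g \<bullet> lam r" using r by (simp add: pos_roots_iff)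
    then show ?thesis
      using neg minuscule coroot_pair_w_nonneg_iff[OF uminus_root[OF g]] coroot_pair_uminus_right[of w g]
      by auto
  qed
  ultimately show ?thesis using eq by (auto elim!: Ints_cases)
qed

lemma refl_simple_eq: "refl (\<alpha> k) \<mu> = \<mu> - pairing k \<mu> *\<^sub>R \<alpha> k"
  by (simp add: refl_def)

lemma pairing_diff_simple: "pairing j (\<mu> - \<alpha> k) = pairing j \<mu> - coroot_pair (\<alpha> k) (\<alpha> j)"
  by (simp add: coroot_pair_diff)

lemma pairing_add_simple: "pairing j (\<mu> + \<alpha> k) = pairing j \<mu> + coroot_pair (\<alpha> k) (\<alpha> j)"
  by (simp add: coroot_pair_add)

lemma cartan_diag: "k \<in> {1..n} \<Longrightarrow> coroot_pair (\<alpha> k) (\<alpha> k) = 2"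
  using coroot_pair_self simple_root_nonzero by blast

text \<open>Two simple roots on which \<open>\<mu>\<close> takes the same value \<open>\<plusminus>1\<close> are orthogonal, since the
  pairings in the orbit stay in \<open>{-1, 0, 1}\<close>; hence the two moves commute.\<close>
lemma orbit_square:
  assumes \<mu>: "\<mu> \<in> orbit" and i: "i \<in> {1..n}" and j: "j \<in> {1..n}" and ij: "i \<noteq> j"
    and e: "e = 1 \<or> e = -1" and pi: "pairing i \<mu> = e" and pj: "pairing j \<mu> = e"
  shows "pairing j (\<mu> - e *\<^sub>R \<alpha> i) = e"
proof -
  have "\<mu> - e *\<^sub>R \<alpha> i \<in> orbit" using refl_simple_in_orbit[OF \<mu> i] pi by (simp add: refl_simple_eq)
  then have "pairing j (\<mu> - e *\<^sub>R \<alpha> i) \<in> {-1, 0, 1}" using orbit_pairing j by blast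
  moreover have "pairing j (\<mu> - e *\<^sub>R \<alpha> i) = e - e * coroot_pair (\<alpha> i) (\<alpha> j)"
    using pj by (simp add: coroot_pair_diff coroot_pair_scaleR)
  moreover have "coroot_pair (\<alpha> i) (\<alpha> j) \<le> 0" using cartan_off_diag_nonpos i j ij by blast
  ultimately show ?thesis using e by auto
qed

definition lower :: "'a \<Rightarrow> 'a \<Rightarrow> bool" where
  "lower \<mu> \<nu> \<longleftrightarrow> \<mu> \<in> orbit \<and> (\<exists>k\<in>{1..n}. pairing k \<mu> = 1 \<and> \<nu> = \<mu> - \<alpha> k)"

lemma lowerI: "\<mu> \<in> orbit \<Longrightarrow> k \<in> {1..n} \<Longrightarrow> pairing k \<mu> = 1 \<Longrightarrow> lower \<mu> (\<mu> - \<alpha> k)"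
  unfolding lower_def by blast

lemma lowerE:
  assumes "lower \<mu> \<nu>"
  obtains k where "\<mu> \<in> orbit" "k \<in> {1..n}" "pairing k \<mu> = 1" "\<nu> = \<mu> - \<alpha> k"
    "pairing k \<nu> = -1" "\<nu> \<in> orbit"
proof -
  obtain k where k: "\<mu> \<in> orbit" "k \<in> {1..n}" "pairing k \<mu> = 1" "\<nu> = \<mu> - \<alpha> k"
    using assms unfolding lower_def by blast
  moreover have "pairing k \<nu> = -1" using k cartan_diag by (simp add: pairing_diff_simple)
  moreover have "\<nu> \<in> orbit" using refl_simple_in_orbit[OF k(1,2)] k by (simp add: refl_simple_eq)
  ultimately show ?thesis using that by blast
qed

lemma lower_in_orbit: "lower\<^sup>*\<^sup>* \<mu> \<nu> \<Longrightarrow> \<mu> \<in> orbit \<Longrightarrow> \<nu> \<in> orbit"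
  by (induction rule: rtranclp_induct) (auto elim: lowerE)

lemma raise_is_lower:
  "\<nu> \<in> orbit \<Longrightarrow> k \<in> {1..n} \<Longrightarrow> pairing k \<nu> = -1 \<Longrightarrow> lower (\<nu> + \<alpha> k) \<nu>"
  using refl_simple_in_orbit[of \<nu> k] lowerI[of "\<nu> + \<alpha> k" k] cartan_diag[of k]
  by (simp add: refl_simple_eq pairing_add_simple)

lemma lower_commute:
  assumes \<mu>: "\<mu> \<in> orbit" and j: "j \<in> {1..n}" and k: "k \<in> {1..n}" and "k \<noteq> j"
    and pj: "pairing j \<mu> = 1" and pk: "pairing k (\<mu> - \<alpha> j) = -1"
  shows "pairing k \<mu> = -1" and "lower (\<mu> + \<alpha> k) (refl (\<alpha> k) (\<mu> - \<alpha> j))"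
proof -
  have \<mu>': "\<mu> - \<alpha> j \<in> orbit" using refl_simple_in_orbit[OF \<mu> j] pj by (simp add: refl_simple_eq)
  have pj': "pairing j (\<mu> - \<alpha> j) = -1" using pj cartan_diag[OF j] by (simp add: pairing_diff_simple)
  show "pairing k \<mu> = -1" using orbit_square[OF \<mu>' j k \<open>k \<noteq> j\<close>[symmetric] _ pj' pk] by simp
  have "pairing j (\<mu> - \<alpha> j + \<alpha> k) = -1"
    using orbit_square[OF \<mu>' k j \<open>k \<noteq> j\<close> _ pk pj'] by simp
  then have "lower (\<mu> - \<alpha> j + \<alpha> k + \<alpha> j) (\<mu> - \<alpha> j + \<alpha> k)"
    using raise_is_lower[OF refl_simple_in_orbit[OF \<mu>' k] j] pk by (simp add: refl_simple_eq)
  then show "lower (\<mu> + \<alpha> k) (refl (\<alpha> k) (\<mu> - \<alpha> j))"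
    using pk by (simp add: refl_simple_eq algebra_simps)
qed

text \<open>Reachability from \<open>w\<close> by lowering is stable under the simple reflections, so it
  exhausts the orbit.\<close>
lemma lower_from_top_refl:
  "lower\<^sup>*\<^sup>* w \<mu> \<Longrightarrow> k \<in> {1..n} \<Longrightarrow> lower\<^sup>*\<^sup>* w (refl (\<alpha> k) \<mu>)"
proof (induction arbitrary: k rule: rtranclp_induct)
  case base
  then show ?case
    using fundamental lowerI[OF top_in_orbit, of k] by (cases "r = k") (auto simp: refl_simple_eq)
next
  case (step \<mu> \<mu>')
  obtain j where j: "\<mu> \<in> orbit" "j \<in> {1..n}" "pairing j \<mu> = 1" "\<mu>' = \<mu> - \<alpha> j"
    "pairing j \<mu>' = -1" "\<mu>' \<in> orbit"
    using step.hyps(2) by (rule lowerE)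
  have reach': "lower\<^sup>*\<^sup>* w \<mu>'" using step.hyps by simp
  consider "pairing k \<mu>' = 0" | "pairing k \<mu>' = 1" | "pairing k \<mu>' = -1"
    using orbit_pairing[OF j(6) step.prems] by blast
  then show ?case
  proof cases
    case 1
    then show ?thesis using reach' by (simp add: refl_simple_eq)
  next
    case 2
    then show ?thesis
      using reach' lowerI[OF j(6) step.prems] by (simp add: refl_simple_eq)
  next
    case 3
    show ?thesis
    proof (cases "k = j")
      case True
      then show ?thesis using 3 j step.hyps(1) by (simp add: refl_simple_eq)
    next
      case False
      note commute = lower_commute[OF j(1,2) step.prems False j(3) 3[unfolded j(4)]]
      have "lower\<^sup>*\<^sup>* w (\<mu> + \<alpha> k)" using step.IH[OF step.prems] commute(1) by (simp add: refl_simple_eq)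
      then show ?thesis using commute(2) j(4) by (simp add: rtranclp.rtrancl_into_rtrancl)
    qed
  qed
qed

lemma orbit_lower_from_top: "\<mu> \<in> orbit \<Longrightarrow> lower\<^sup>*\<^sup>* w \<mu>"
proof -
  have "lower\<^sup>*\<^sup>* w (refl_word \<alpha> l w)" if "is_word l" for l
    using that by (induction l) (auto intro: lower_from_top_refl)
  then show "\<mu> \<in> orbit \<Longrightarrow> lower\<^sup>*\<^sup>* w \<mu>" unfolding orbit_def by blast
qed

lemma orbit_not_top: "\<mu> \<in> orbit \<Longrightarrow> \<mu> \<noteq> w \<Longrightarrow> \<exists>k\<in>{1..n}. pairing k \<mu> = -1"
proof -
  assume "\<mu> \<in> orbit" "\<mu> \<noteq> w"
  from orbit_lower_from_top[OF \<open>\<mu> \<in> orbit\<close>] obtain \<mu>0 where "lower \<mu>0 \<mu>"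
    using \<open>\<mu> \<noteq> w\<close> by (cases rule: rtranclp.cases) auto
  then show ?thesis by (elim lowerE) blast
qed

lemma lower_confluent: "confluentp lower"
proof (rule diamond_imp_confluentp)
  fix \<mu> \<nu>1 \<nu>2 assume "lower \<mu> \<nu>1" "lower \<mu> \<nu>2" "\<nu>1 \<noteq> \<nu>2"
  obtain i where i: "\<mu> \<in> orbit" "i \<in> {1..n}" "pairing i \<mu> = 1" "\<nu>1 = \<mu> - \<alpha> i" "\<nu>1 \<in> orbit"
    using \<open>lower \<mu> \<nu>1\<close> by (rule lowerE)
  obtain j where j: "j \<in> {1..n}" "pairing j \<mu> = 1" "\<nu>2 = \<mu> - \<alpha> j" "\<nu>2 \<in> orbit"
    using \<open>lower \<mu> \<nu>2\<close> by (rule lowerE)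
  have ij: "i \<noteq> j" using \<open>\<nu>1 \<noteq> \<nu>2\<close> i(4) j(3) by auto
  have "pairing j \<nu>1 = 1" using orbit_square[OF i(1,2) j(1) ij _ i(3) j(2)] i(4) by simp
  then have "lower \<nu>1 (\<nu>1 - \<alpha> j)" by (rule lowerI[OF i(5) j(1)])
  moreover have "pairing i \<nu>2 = 1" using orbit_square[OF i(1) j(1) i(2) ij[symmetric] _ j(2) i(3)] j(3) by simp
  then have "lower \<nu>2 (\<nu>2 - \<alpha> i)" by (rule lowerI[OF j(4) i(2)])
  moreover have "\<nu>1 - \<alpha> j = \<nu>2 - \<alpha> i" using i(4) j(3) by simp
  ultimately show "\<exists>\<zeta>. lower \<nu>1 \<zeta> \<and> lower \<nu>2 \<zeta>" by auto
qed

lemma min_rep_pos_root_orth: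
  assumes \<tau>: "\<tau> \<in> WP" and d: "d \<in> Rp" "d \<bullet> lam r = 0"
  shows "\<tau> d \<in> Rp"
proof -
  obtain l where l: "is_word l" "\<tau> = refl_word \<alpha> l" using \<tau> weyl_word by (auto simp: min_reps_def)
  have dR: "d \<in> R" using d pos_roots_iff by blast
  have lin: "linear \<tau>" using l(2) linear_refl_word by simp
  have "\<tau> d = \<tau> (\<Sum>j=1..n. (d \<bullet> lam j) *\<^sub>R \<alpha> j)"
    using root_coeff_expansion[OF dR] by (rule arg_cong)
  also have "\<dots> = (\<Sum>j=1..n. (d \<bullet> lam j) *\<^sub>R \<tau> (\<alpha> j))"
    by (simp add: linear_sum[OF lin] linear_scale[OF lin])
  finally have "\<tau> d \<bullet> lam t = (\<Sum>j=1..n. (d \<bullet> lam j) * (\<tau> (\<alpha> j) \<bullet> lam t))" for t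
    by (simp add: inner_sum_left)
  moreover have "0 \<le> (d \<bullet> lam j) * (\<tau> (\<alpha> j) \<bullet> lam t)" if "j \<in> {1..n}" "t \<in> {1..n}" for j t
  proof (cases "j = r")
    case False
    then have "\<tau> (\<alpha> j) \<in> Rp" using \<tau> that(1) by (auto simp: min_reps_def)
    then show ?thesis using d(1) that by (simp add: pos_roots_iff)
  qed (simp add: d(2))
  ultimately have "\<forall>t\<in>{1..n}. 0 \<le> \<tau> d \<bullet> lam t" by (auto intro!: sum_nonneg)
  moreover have "\<tau> d \<in> R" using refl_word_root[OF l(1) dR] l(2) by simp
  ultimately show ?thesis by (simp add: pos_roots_iff)
qed

text \<open>If \<open>\<tau> w = \<tau>' w\<close>, then \<open>u = \<tau>\<inverse> \<tau>'\<close> fixes \<open>w\<close>, so \<open>u \<alpha>\<^sub>i\<close> has the same \<open>\<alpha>\<^sub>r\<close>-coefficient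
  as \<open>\<alpha>\<^sub>i\<close>; as \<open>\<tau>\<close> keeps positive roots without \<open>\<alpha>\<^sub>r\<close> positive, \<open>u\<close> maps all simple roots
  to positive roots and is the identity.\<close>
lemma min_reps_inj_on_orbit:
  assumes \<tau>: "\<tau> \<in> WP" and \<tau>': "\<tau>' \<in> WP" and eq: "\<tau> w = \<tau>' w"
  shows "\<tau> = \<tau>'"
proof -
  obtain l1 where l1: "is_word l1" "\<tau> = refl_word \<alpha> l1" using \<tau> weyl_word by (auto simp: min_reps_def)
  obtain l2 where l2: "is_word l2" "\<tau>' = refl_word \<alpha> l2" using \<tau>' weyl_word by (auto simp: min_reps_def)
  define u where "u = refl_word \<alpha> (rev l1 @ l2)"
  have u_word: "is_word (rev l1 @ l2)" using l1 l2 by auto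
  have \<tau>u: "\<tau> (u x) = \<tau>' x" for x using l1 l2 refl_word_rev'[OF l1(1)] by (simp add: u_def refl_word_append)
  have uw: "u w = w" using eq l1 l2 refl_word_rev[OF l1(1), of w] by (simp add: u_def refl_word_append)
  have "u (\<alpha> i) \<in> Rp" if i: "i \<in> {1..n}" for i
  proof -
    have gR: "u (\<alpha> i) \<in> R" using refl_word_root[OF u_word simple_root[OF i]] by (simp add: u_def)
    have "w \<bullet> u (\<alpha> i) = w \<bullet> \<alpha> i" using refl_word_inner[OF u_word, of w "\<alpha> i"] uw by (simp add: u_def)
    then have coeff: "u (\<alpha> i) \<bullet> lam r = (if i = r then 1 else 0)"
      using inner_w_root[OF gR] inner_w_simple_root[OF i] simple_root_nonzero[OF r] by auto
    show ?thesis
    proof (cases "i = r")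
      case True
      then show ?thesis using coeff pos_root_if_coeff_pos[OF gR r] by simp
    next
      case False
      show ?thesis
      proof (rule ccontr)
        assume "u (\<alpha> i) \<notin> Rp"
        then have "- u (\<alpha> i) \<in> Rp" using pos_or_neg_root[OF gR] by blast
        then have "\<tau> (- u (\<alpha> i)) \<in> Rp" using min_rep_pos_root_orth[OF \<tau>] coeff False by simp
        moreover have "\<tau> (- u (\<alpha> i)) = - \<tau>' (\<alpha> i)"
          using \<tau>u[of "\<alpha> i"] linear_neg[OF linear_refl_word, of \<alpha> l1 "u (\<alpha> i)"] l1(2) by simp
        moreover have "\<tau>' (\<alpha> i) \<in> Rp" using \<tau>' i False by (auto simp: min_reps_def)
        ultimately show False using pos_root_uminus[of "\<tau>' (\<alpha> i)"] by simp
      qed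
    qed
  qed
  then have "u = id"
    using weyl_simple_pos_imp_id refl_word_in_weyl[OF u_word] by (simp add: u_def)
  then show ?thesis using \<tau>u by fastforce
qed

lemma lower_min_rep:
  assumes \<sigma>: "\<sigma> \<in> WP" and k: "k \<in> {1..n}" and p: "pairing k (\<sigma> w) = 1"
  shows "refl (\<alpha> k) \<circ> \<sigma> \<in> WP" and "wlen R \<alpha> n (refl (\<alpha> k) \<circ> \<sigma>) = Suc (wlen R \<alpha> n \<sigma>)"
proof -
  have \<sigma>W: "\<sigma> \<in> weyl R" using \<sigma> by (simp add: min_reps_def)
  obtain l where l: "is_word l" "\<sigma> = refl_word \<alpha> l" using weyl_word \<sigma>W by blast
  have orth: "\<And>x y. \<sigma> x \<bullet> \<sigma> y = x \<bullet> y" using refl_word_inner l by simp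
  have "(refl (\<alpha> k) \<circ> \<sigma>) (\<alpha> i) \<in> Rp" if i: "i \<in> {1..n} - {r}" for i
  proof -
    have "pairing k (\<sigma> w) \<noteq> coroot_pair w (\<alpha> i)" using p fundamental i by auto
    then have "\<sigma> (\<alpha> i) \<noteq> \<alpha> k" using coroot_pair_orthogonal_map[OF orth] by metis
    then show ?thesis using refl_simple_pos_root[OF k] \<sigma> i by (simp add: min_reps_def)
  qed
  then show "refl (\<alpha> k) \<circ> \<sigma> \<in> WP"
    using refl_group.step[OF simple_root[OF k] \<sigma>W] by (simp add: min_reps_def)
  define d where "d = refl_word \<alpha> (rev l) (\<alpha> k)"
  have dR: "d \<in> R" using refl_word_root simple_root[OF k] l(1) by (simp add: d_def)
  have \<sigma>d: "\<sigma> d = \<alpha> k" using refl_word_rev'[OF l(1)] l(2) by (simp add: d_def)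
  then have "coroot_pair w d = 1" using coroot_pair_orthogonal_map[OF orth, of w d] p by simp
  then have "d \<in> Rp" using coroot_pair_w_pos_iff[OF dR] pos_root_if_coeff_pos[OF dR r] by simp
  then show "wlen R \<alpha> n (refl (\<alpha> k) \<circ> \<sigma>) = Suc (wlen R \<alpha> n \<sigma>)"
    using wlen_refl_simple[OF \<sigma>W k _ \<sigma>d] by blast
qed

definition depth :: "'a \<Rightarrow> real" where "depth \<mu> = height (w - \<mu>)"

lemma depth_lower:
  assumes "lower \<mu> \<nu>"
  shows "depth \<nu> = depth \<mu> + 1"
proof -
  obtain k where k: "k \<in> {1..n}" "\<nu> = \<mu> - \<alpha> k" using assms by (elim lowerE) blast
  then have "w - \<nu> = (w - \<mu>) + \<alpha> k" by (simp add: algebra_simps)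
  then have "depth \<nu> = height (w - \<mu>) + height (\<alpha> k)" unfolding depth_def by (simp only: height_add)
  then show ?thesis using height_simple_root[OF k(1)] by (simp add: depth_def)
qed

lemma min_rep_lift:
  assumes "lower\<^sup>*\<^sup>* \<mu> \<nu>" and \<sigma>: "\<sigma> \<in> WP" "\<sigma> w = \<mu>"
  shows "\<exists>\<sigma>'\<in>WP. \<sigma>' w = \<nu> \<and> bruhat_le R \<alpha> n \<sigma> \<sigma>' \<and>
           real (wlen R \<alpha> n \<sigma>') - depth \<nu> = real (wlen R \<alpha> n \<sigma>) - depth \<mu>"
  using assms(1)
proof (induction rule: rtranclp_induct)
  case base
  then show ?case using \<sigma> by (auto simp: bruhat_le_def)
next
  case (step \<nu> \<nu>')
  obtain \<sigma>' where \<sigma>': "\<sigma>' \<in> WP" "\<sigma>' w = \<nu>" "bruhat_le R \<alpha> n \<sigma> \<sigma>'"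
    "real (wlen R \<alpha> n \<sigma>') - depth \<nu> = real (wlen R \<alpha> n \<sigma>) - depth \<mu>" using step.IH by blast
  obtain k where k: "k \<in> {1..n}" "pairing k \<nu> = 1" "\<nu>' = \<nu> - \<alpha> k"
    using step.hyps(2) by (elim lowerE)
  let ?\<sigma> = "refl (\<alpha> k) \<circ> \<sigma>'"
  have p: "pairing k (\<sigma>' w) = 1" using k \<sigma>' by simp
  have min_rep: "?\<sigma> \<in> WP" and len: "wlen R \<alpha> n ?\<sigma> = Suc (wlen R \<alpha> n \<sigma>')"
    using lower_min_rep[OF \<sigma>'(1) k(1) p] by auto
  have "?\<sigma> w = \<nu>'" using k \<sigma>'(2) by (simp add: refl_simple_eq)
  moreover have "(\<sigma>', ?\<sigma>) \<in> {(u, refl b \<circ> u) | u b. u \<in> weyl R \<and> b \<in> Rp \<and>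
                 wlen R \<alpha> n u < wlen R \<alpha> n (refl b \<circ> u)}"
    using \<sigma>'(1) simple_pos_root[OF k(1)] len by (auto simp: min_reps_def)
  then have "bruhat_le R \<alpha> n \<sigma> ?\<sigma>"
    using \<sigma>'(3) unfolding bruhat_le_def by (meson rtrancl.rtrancl_into_rtrancl)
  moreover have "real (wlen R \<alpha> n ?\<sigma>) - depth \<nu>' = real (wlen R \<alpha> n \<sigma>) - depth \<mu>"
    using len \<sigma>'(4) depth_lower[OF step.hyps(2)] by simp
  ultimately show ?case using min_rep by blast
qed

lemma id_min_rep: "id \<in> WP"
  using simple_pos_root by (auto simp: min_reps_def refl_group.id)

text \<open>The depth of \<open>\<mu>\<close> is the length of the element of \<open>W\<^sup>P\<close> sending \<open>w\<close> to \<open>\<mu>\<close>.\<close>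
lemma orbit_depth: "\<mu> \<in> orbit \<Longrightarrow> \<exists>m \<le> card Rp. depth \<mu> = real m"
proof -
  assume "\<mu> \<in> orbit"
  then obtain \<sigma> where "\<sigma> \<in> WP" "real (wlen R \<alpha> n \<sigma>) - depth \<mu> = real (wlen R \<alpha> n id) - depth w"
    using min_rep_lift[OF orbit_lower_from_top id_min_rep] by fastforce
  then have "depth \<mu> = real (wlen R \<alpha> n \<sigma>)" using wlen_id by (simp add: depth_def height_def)
  then show ?thesis using wlen_le_card by blast
qed

lemma lower_depth_nat:
  assumes "lower \<mu> \<nu>"
  shows "nat \<lfloor>depth \<nu>\<rfloor> = Suc (nat \<lfloor>depth \<mu>\<rfloor>)" and "nat \<lfloor>depth \<nu>\<rfloor> \<le> card Rp"
proof -
  have "\<mu> \<in> orbit" "\<nu> \<in> orbit" using assms by (auto elim: lowerE)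
  then obtain a b where a: "depth \<mu> = real a" and b: "depth \<nu> = real b" "b \<le> card Rp"
    using orbit_depth by meson
  have "real b = real (Suc a)" using depth_lower[OF assms] a b by simp
  then have "b = Suc a" by (simp only: of_nat_eq_iff)
  then show "nat \<lfloor>depth \<nu>\<rfloor> = Suc (nat \<lfloor>depth \<mu>\<rfloor>)" "nat \<lfloor>depth \<nu>\<rfloor> \<le> card Rp"
    using a b by simp_all
qed

lemma lower_bottom_exists: "\<exists>z. lower\<^sup>*\<^sup>* w z \<and> (\<nexists>\<nu>. lower z \<nu>)"
proof (rule rtranclp_normal_form_exists)
  fix \<mu> \<nu> assume "lower \<mu> \<nu>"
  then show "card Rp - nat \<lfloor>depth \<nu>\<rfloor> < card Rp - nat \<lfloor>depth \<mu>\<rfloor>"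
    using lower_depth_nat by fastforce
qed

lemma orbit_lower_to_bottom:
  assumes "lower\<^sup>*\<^sup>* w z" "\<nexists>\<nu>. lower z \<nu>" "\<mu> \<in> orbit"
  shows "lower\<^sup>*\<^sup>* \<mu> z"
  using confluentp_rtranclp_normal_form[OF lower_confluent orbit_lower_from_top[OF assms(3)] assms(1,2)] .

definition deficit :: "nat \<Rightarrow> 'a \<Rightarrow> real" where "deficit j \<mu> = (w - \<mu>) \<bullet> lam j"

lemma deficit_lower:
  "lower \<mu> \<nu> \<Longrightarrow> j \<in> {1..n} \<Longrightarrow> \<exists>k\<in>{1..n}. deficit j \<nu> = deficit j \<mu> + (if k = j then 1 else 0)"
  by (elim lowerE) (auto simp: deficit_def inner_diff_left simple_root_coeff)

lemma deficit_lower_mono: "lower\<^sup>*\<^sup>* \<mu> \<nu> \<Longrightarrow> j \<in> {1..n} \<Longrightarrow> deficit j \<mu> \<le> deficit j \<nu>"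
  by (induction rule: rtranclp_induct) (use deficit_lower in fastforce)+

lemma deficit_int: "\<mu> \<in> orbit \<Longrightarrow> j \<in> {1..n} \<Longrightarrow> deficit j \<mu> \<in> \<int>"
proof -
  assume "\<mu> \<in> orbit" "j \<in> {1..n}"
  have "lower\<^sup>*\<^sup>* w \<nu> \<Longrightarrow> deficit j \<nu> \<in> \<int>" for \<nu>
  proof (induction rule: rtranclp_induct)
    case (step \<nu> \<nu>')
    then show ?case using deficit_lower[OF step.hyps(2) \<open>j \<in> {1..n}\<close>] by auto
  qed (simp add: deficit_def)
  then show ?thesis using orbit_lower_from_top[OF \<open>\<mu> \<in> orbit\<close>] by blast
qed

definition raise :: "int \<Rightarrow> nat \<Rightarrow> 'a \<Rightarrow> 'a \<Rightarrow> bool" where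
  "raise c s \<mu> \<nu> \<longleftrightarrow> lower \<nu> \<mu> \<and> of_int c \<le> deficit s \<nu>"

lemma raise_in_orbit: "(raise c s)\<^sup>*\<^sup>* \<mu> \<nu> \<Longrightarrow> \<mu> \<in> orbit \<Longrightarrow> \<nu> \<in> orbit"
  by (induction rule: rtranclp_induct) (auto simp: raise_def elim: lowerE)

lemma raise_lower: "(raise c s)\<^sup>*\<^sup>* \<mu> \<nu> \<Longrightarrow> lower\<^sup>*\<^sup>* \<nu> \<mu>"
  by (induction rule: rtranclp_induct) (auto simp: raise_def intro: converse_rtranclp_into_rtranclp)

lemma lower_raise:
  "lower\<^sup>*\<^sup>* \<mu> \<nu> \<Longrightarrow> s \<in> {1..n} \<Longrightarrow> of_int c \<le> deficit s \<mu> \<Longrightarrow> (raise c s)\<^sup>*\<^sup>* \<nu> \<mu>"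
proof (induction rule: rtranclp_induct)
  case (step \<nu> \<nu>')
  then have "raise c s \<nu>' \<nu>" using deficit_lower_mono[OF step.hyps(1) step.prems(1)] by (auto simp: raise_def)
  then show ?case using step by (meson converse_rtranclp_into_rtranclp)
qed simp

lemma raise_confluent:
  assumes s: "s \<in> {1..n}"
  shows "confluentp (raise c s)"
proof (rule diamond_imp_confluentp)
  fix \<mu> \<nu>1 \<nu>2 assume r1: "raise c s \<mu> \<nu>1" and r2: "raise c s \<mu> \<nu>2" and "\<nu>1 \<noteq> \<nu>2"
  obtain i where i: "\<nu>1 \<in> orbit" "i \<in> {1..n}" "\<mu> = \<nu>1 - \<alpha> i" "pairing i \<mu> = -1" "\<mu> \<in> orbit"
    using r1 unfolding raise_def by (auto elim: lowerE)
  obtain j where j: "\<nu>2 \<in> orbit" "j \<in> {1..n}" "\<mu> = \<nu>2 - \<alpha> j" "pairing j \<mu> = -1"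
    using r2 unfolding raise_def by (auto elim: lowerE)
  have ij: "i \<noteq> j" using \<open>\<nu>1 \<noteq> \<nu>2\<close> i(3) j(3) by auto
  define \<zeta> where "\<zeta> = \<mu> + \<alpha> i + \<alpha> j"
  have \<zeta>1: "\<zeta> = \<nu>1 + \<alpha> j" using i(3) by (simp add: \<zeta>_def)
  have \<zeta>2: "\<zeta> = \<nu>2 + \<alpha> i" using j(3) by (simp add: \<zeta>_def algebra_simps)
  have "pairing j \<nu>1 = -1" using orbit_square[OF i(5) i(2) j(2) ij _ i(4) j(4)] i(3) by simp
  then have "lower \<zeta> \<nu>1" using raise_is_lower[OF i(1) j(2)] \<zeta>1 by simp
  moreover have "pairing i \<nu>2 = -1" using orbit_square[OF i(5) j(2) i(2) ij[symmetric] _ j(4) i(4)] j(3) by simp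
  then have "lower \<zeta> \<nu>2" using raise_is_lower[OF j(1) i(2)] \<zeta>2 by simp
  moreover have "deficit s \<zeta> = deficit s \<nu>1 - (if j = s then 1 else 0)"
    using \<zeta>1 j(2) s by (simp add: deficit_def inner_diff_left inner_add_left simple_root_coeff)
  moreover have "deficit s \<zeta> = deficit s \<nu>2 - (if i = s then 1 else 0)"
    using \<zeta>2 i(2) s by (simp add: deficit_def inner_diff_left inner_add_left simple_root_coeff)
  ultimately have "raise c s \<nu>1 \<zeta>" "raise c s \<nu>2 \<zeta>" using r1 r2 ij by (auto simp: raise_def split: if_splits)
  then show "\<exists>\<zeta>. raise c s \<nu>1 \<zeta> \<and> raise c s \<nu>2 \<zeta>" by blast
qed

lemma raise_normal_form_exists: "\<exists>g. (raise c s)\<^sup>*\<^sup>* z g \<and> (\<nexists>y. raise c s g y)"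
proof (rule rtranclp_normal_form_exists)
  fix x y assume "raise c s x y"
  then have "nat \<lfloor>depth x\<rfloor> = Suc (nat \<lfloor>depth y\<rfloor>)"
    by (intro lower_depth_nat(1)) (simp add: raise_def)
  then show "nat \<lfloor>depth y\<rfloor> < nat \<lfloor>depth x\<rfloor>" by linarith
qed

lemma raise_normal_form_deficit:
  assumes s: "s \<in> {1..n}" and c: "0 \<le> c" and g: "g \<in> orbit" "of_int c \<le> deficit s g"
    and normal: "\<nexists>y. raise c s g y"
  shows "deficit s g = of_int c"
proof -
  have "\<not> of_int c + 1 \<le> deficit s g"
  proof
    assume gap: "of_int c + 1 \<le> deficit s g"
    then have "g \<noteq> w" using c by (auto simp: deficit_def)
    then obtain k where k: "k \<in> {1..n}" "pairing k g = -1" using orbit_not_top g(1) by blast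
    then have "lower (g + \<alpha> k) g" using raise_is_lower g(1) by blast
    moreover have "deficit s (g + \<alpha> k) \<ge> deficit s g - 1"
      using k(1) s by (simp add: deficit_def inner_diff_left inner_add_left simple_root_coeff)
    ultimately have "raise c s g (g + \<alpha> k)" using gap by (simp add: raise_def)
    then show False using normal by blast
  qed
  then show ?thesis using g(2) deficit_int[OF g(1) s] by (auto elim!: Ints_cases)
qed

text \<open>The highest weight of the orbit whose \<open>\<alpha> s\<close>-coefficient is \<open>c\<close>: raise from the
  bottom as long as that coefficient stays \<open>\<ge> c\<close>. Confluence makes the end point unique,
  so it lies above every weight of coefficient \<open>c\<close>.\<close>
lemma level_top_exists:
  assumes s: "s \<in> {1..n}" and c: "0 \<le> c" and \<mu>: "\<mu> \<in> orbit" "of_int c \<le> deficit s \<mu>"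
  shows "\<exists>g\<in>orbit. deficit s g = of_int c \<and> (\<forall>x\<in>orbit. deficit s x = of_int c \<longrightarrow> lower\<^sup>*\<^sup>* g x)"
proof -
  obtain z where z: "lower\<^sup>*\<^sup>* w z" "\<nexists>\<nu>. lower z \<nu>" using lower_bottom_exists by blast
  have cz: "of_int c \<le> deficit s z"
    using \<mu>(2) deficit_lower_mono[OF orbit_lower_to_bottom[OF z \<mu>(1)] s] by linarith
  obtain g where g: "(raise c s)\<^sup>*\<^sup>* z g" "\<nexists>y. raise c s g y"
    using raise_normal_form_exists by blast
  have g_orbit: "g \<in> orbit" using raise_in_orbit[OF g(1) lower_in_orbit[OF z(1) top_in_orbit]] .
  have "of_int c \<le> deficit s g"
    using g(1) cz by (cases rule: rtranclp.cases) (auto simp: raise_def)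
  then have "deficit s g = of_int c" using raise_normal_form_deficit[OF s c g_orbit _ g(2)] by blast
  moreover have "lower\<^sup>*\<^sup>* g x" if "x \<in> orbit" "deficit s x = of_int c" for x
  proof -
    have "(raise c s)\<^sup>*\<^sup>* z x" using lower_raise[OF orbit_lower_to_bottom[OF z that(1)] s] that(2) by simp
    then have "(raise c s)\<^sup>*\<^sup>* x g" using confluentp_rtranclp_normal_form[OF raise_confluent[OF s] _ g] by blast
    then show ?thesis by (rule raise_lower)
  qed
  ultimately show ?thesis using g_orbit by blast
qed

lemma min_rep_least_in_level:
  assumes s: "s \<in> {1..n}" and c: "0 \<le> c" and \<mu>: "\<mu> \<in> orbit" "of_int c \<le> deficit s \<mu>"
  shows "\<exists>\<tau>\<^sub>c\<in>WP. deficit s (\<tau>\<^sub>c w) = of_int c \<and>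
           (\<forall>\<tau>\<in>WP. deficit s (\<tau> w) = of_int c \<longrightarrow> bruhat_le R \<alpha> n \<tau>\<^sub>c \<tau>)"
proof -
  obtain g where g: "g \<in> orbit" "deficit s g = of_int c"
    and above: "\<And>x. x \<in> orbit \<Longrightarrow> deficit s x = of_int c \<Longrightarrow> lower\<^sup>*\<^sup>* g x"
    using level_top_exists[OF assms] by blast
  obtain \<tau>\<^sub>c where \<tau>\<^sub>c: "\<tau>\<^sub>c \<in> WP" "\<tau>\<^sub>c w = g"
    using min_rep_lift[OF orbit_lower_from_top[OF g(1)] id_min_rep] by auto
  have "bruhat_le R \<alpha> n \<tau>\<^sub>c \<tau>" if \<tau>: "\<tau> \<in> WP" "deficit s (\<tau> w) = of_int c" for \<tau>
  proof -
    have "\<tau> w \<in> orbit" using weyl_in_orbit \<tau>(1) by (simp add: min_reps_def)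
    then obtain \<sigma> where \<sigma>: "\<sigma> \<in> WP" "\<sigma> w = \<tau> w" "bruhat_le R \<alpha> n \<tau>\<^sub>c \<sigma>"
      using min_rep_lift[OF above \<tau>\<^sub>c(1)] \<tau>(2) \<tau>\<^sub>c(2) by blast
    then show ?thesis using min_reps_inj_on_orbit[OF \<sigma>(1) \<tau>(1) \<sigma>(2)] by simp
  qed
  then show ?thesis using \<tau>\<^sub>c g(2) by blast
qed

end

theorem lemma4p1:
  fixes R :: "'a::euclidean_space set"
    and \<alpha> \<omega> lam :: "nat \<Rightarrow> 'a"
    and n r s :: nat
    and w0 w0P :: "'a \<Rightarrow> 'a"
    and a :: "nat \<Rightarrow> int"
    and c :: int
  assumes rs: "root_system R" and irr: "irreducible_rs R"
    and rank: "n = DIM('a)"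
    and base: "is_base R \<alpha> n"
    and fund: "\<forall>i\<in>{1..n}. \<forall>j\<in>{1..n}. coroot_pair (\<omega> i) (\<alpha> j) = (if i = j then 1 else 0)"
    and lam: "\<forall>t\<in>{1..n}. \<forall>j\<in>{1..n}. \<alpha> j \<bullet> lam t = (if j = t then 1 else 0)"
    and r: "r \<in> {1..n}"
    and minuscule: "\<forall>\<beta>\<in>pos_roots R \<alpha> n. coroot_pair (\<omega> r) \<beta> \<le> 1"
    and w0: "w0 \<in> weyl R" "\<forall>w\<in>weyl R. wlen R \<alpha> n w \<le> wlen R \<alpha> n w0"
    and w0P: "w0P \<in> min_reps R \<alpha> n r" "\<exists>u\<in>weyl_par \<alpha> n r. w0P = w0 \<circ> u"
    and a: "w0P (\<omega> r) = \<omega> r - (\<Sum>j=1..n. of_int (a j) *\<^sub>R \<alpha> j)"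
    and s: "s \<in> {1..n}"
    and c: "0 \<le> c" "c \<le> a s"
  shows "\<exists>!\<tau>. \<tau> \<in> min_reps R \<alpha> n r \<and> (\<omega> r - \<tau> (\<omega> r)) \<bullet> lam s = of_int c \<and>
           (\<forall>\<tau>'. \<tau>' \<in> min_reps R \<alpha> n r \<and> (\<omega> r - \<tau>' (\<omega> r)) \<bullet> lam s = of_int c
                  \<longrightarrow> \<not> bruhat_less R \<alpha> n \<tau>' \<tau>)"
proof -
  interpret minuscule_weight R \<alpha> n lam r "\<omega> r"
    using rs base lam r fund minuscule by unfold_locales auto
  have "w0P (\<omega> r) \<in> orbit" using weyl_in_orbit w0P(1) by (simp add: min_reps_def)
  moreover have "deficit s (w0P (\<omega> r)) = of_int (a s)"
    using a coeff_lincomb[OF s] by (simp add: deficit_def)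
  ultimately obtain \<tau>\<^sub>c where \<tau>\<^sub>c: "\<tau>\<^sub>c \<in> WP" "deficit s (\<tau>\<^sub>c (\<omega> r)) = of_int c"
    and least: "\<And>\<tau>. \<tau> \<in> WP \<Longrightarrow> deficit s (\<tau> (\<omega> r)) = of_int c \<Longrightarrow> bruhat_le R \<alpha> n \<tau>\<^sub>c \<tau>"
    using min_rep_least_in_level[OF s c(1)] c(2) by force
  have "\<exists>!\<tau>. (\<tau> \<in> WP \<and> (\<omega> r - \<tau> (\<omega> r)) \<bullet> lam s = of_int c) \<and>
           (\<forall>\<tau>'. \<tau>' \<in> WP \<and> (\<omega> r - \<tau>' (\<omega> r)) \<bullet> lam s = of_int c \<longrightarrow> \<not> bruhat_less R \<alpha> n \<tau>' \<tau>)"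
  proof (rule least_imp_ex1_minimal[where le = "bruhat_le R \<alpha> n" and lt = "bruhat_less R \<alpha> n"])
    show "u = v" if "bruhat_le R \<alpha> n u v" "bruhat_le R \<alpha> n v u" for u v
      using bruhat_le_wlen[OF that(1)] bruhat_le_wlen[OF that(2)] by auto
    show "bruhat_less R \<alpha> n u v \<longleftrightarrow> bruhat_le R \<alpha> n u v \<and> u \<noteq> v" for u v
      by (rule bruhat_less_def)
    show "\<tau>\<^sub>c \<in> WP \<and> (\<omega> r - \<tau>\<^sub>c (\<omega> r)) \<bullet> lam s = of_int c" using \<tau>\<^sub>c by (simp add: deficit_def)
    show "bruhat_le R \<alpha> n \<tau>\<^sub>c \<tau>" if "\<tau> \<in> WP \<and> (\<omega> r - \<tau> (\<omega> r)) \<bullet> lam s = of_int c" for \<tau>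
      using least that by (simp add: deficit_def)
  qed
  then show ?thesis by (simp only: conj_assoc)
qed

end
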